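(* Let two independent walkers start at the origin and each take $n\ge1$ steps, each step being $(1,0)$ or $(0,1)$ with probability $1/2$ independently. The probability that their vertex sets have no point in common other than the origin is $\binom{2n}{n}/4^n$.
   Context: The vertex set of a walk $v_0=(0,0),v_1,\dots,v_n$ is $\{v_0,\dots,v_n\}$. *)

theory Defs
  imports "HOL-Probability.Probability"
begin

definition step_vec :: "bool \<Rightarrow> int \<times> int" where
  "step_vec b = (if b then (1, 0) else (0, 1))"

definition walk_vertex :: "bool list \<Rightarrow> nat \<Rightarrow> int \<times> int" where
  "walk_vertex s k = (\<Sum>b\<leftarrow>take k s. step_vec b)"

definition vertex_set :: "bool list \<Rightarrow> (int \<times> int) set" where
  "vertex_set s = {walk_vertex s k | k. k \<le> length s}"

text \<open>All walks with n steps; uniform choice = independent fair steps.\<close>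
definition walks :: "nat \<Rightarrow> bool list set" where
  "walks n = {s. length s = n}"

end

theory Submission
  imports Defs
begin

text \<open>
  After k steps both walks lie on the antidiagonal x + y = k, so they can only meet at equal
  times, and then exactly when their first coordinates agree. The difference of the first
  coordinates performs a lazy walk with steps +1 and -1 (one pair of step choices each) and
  0 (two pairs). Started at d > 0, the number of its m-step paths avoiding 0 is the window sum
  of C(2m, k) over m - d \<le> k < m + d (reflection principle, reading a lazy step as two simple
  half-steps); here this is verified through the common recurrence. Started at 0, the first
  step must go to \<plusminus>1, which leaves 2 C(2m+1, m) = C(2m+2, m+1) good pairs among the
  4^(m+1) pairs of (m+1)-step walks.
\<close>

lemma finite_walks [simp]: "finite (walks n)"
  using finite_lists_length_eq[of "UNIV :: bool set" n] by (simp add: walks_def)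

lemma card_walks: "card (walks n) = 2 ^ n"
  using card_lists_length_eq[of "UNIV :: bool set" n] by (simp add: walks_def)

lemma walks_Suc: "walks (Suc n) = Cons True ` walks n \<union> Cons False ` walks n"
  unfolding walks_def length_Suc_conv by auto

lemma sum_walks_Suc:
  "(\<Sum>s\<in>walks (Suc n). f s) = (\<Sum>s\<in>walks n. f (True # s)) + (\<Sum>s\<in>walks n. f (False # s))"
  unfolding walks_Suc by (subst sum.union_disjoint) (auto simp: sum.reindex)

lemma walk_vertex_0 [simp]: "walk_vertex s 0 = (0, 0)"
  by (simp add: walk_vertex_def zero_prod_def)

lemma walk_vertex_Cons_Suc [simp]: "walk_vertex (a # s) (Suc k) = step_vec a + walk_vertex s k"
  by (simp add: walk_vertex_def)

lemma fst_plus_snd_walk_vertex: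
  "fst (walk_vertex s k) + snd (walk_vertex s k) = int (min k (length s))"
proof (induction s arbitrary: k)
  case Nil
  then show ?case by (simp add: walk_vertex_def)
next
  case (Cons a s)
  then show ?case by (cases k) (auto simp: step_vec_def)
qed

lemma walk_vertex_eq_origin_iff:
  "k \<le> length s \<Longrightarrow> walk_vertex s k = (0, 0) \<longleftrightarrow> k = 0"
  using fst_plus_snd_walk_vertex[of s k] by auto

lemma walk_vertex_eq_imp_same_index:
  assumes "walk_vertex s j = walk_vertex t k" "j \<le> length s" "k \<le> length t"
  shows "j = k"
  using fst_plus_snd_walk_vertex[of s j] fst_plus_snd_walk_vertex[of t k] assms by simp

lemma vertex_set_inter_eq_origin_iff:
  assumes "length s = length t"
  shows "vertex_set s \<inter> vertex_set t = {(0, 0)} \<longleftrightarrow>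
           (\<forall>k<length s. walk_vertex s (Suc k) \<noteq> walk_vertex t (Suc k))"
proof -
  have "(0, 0) \<in> vertex_set s \<inter> vertex_set t"
    unfolding vertex_set_def by (auto intro!: exI[of _ 0])
  moreover have "vertex_set s \<inter> vertex_set t \<subseteq> {(0, 0)} \<longleftrightarrow>
      (\<forall>k\<le>length s. 0 < k \<longrightarrow> walk_vertex s k \<noteq> walk_vertex t k)"
  proof
    assume sub: "vertex_set s \<inter> vertex_set t \<subseteq> {(0, 0)}"
    show "\<forall>k\<le>length s. 0 < k \<longrightarrow> walk_vertex s k \<noteq> walk_vertex t k"
    proof (intro allI impI notI)
      fix k assume k: "k \<le> length s" "0 < k" and eq: "walk_vertex s k = walk_vertex t k"
      then have "walk_vertex s k \<in> vertex_set s \<inter> vertex_set t"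
        using assms unfolding vertex_set_def by (metis (mono_tags, lifting) IntI mem_Collect_eq)
      with sub k show False
        using walk_vertex_eq_origin_iff by blast
    qed
  next
    assume apart: "\<forall>k\<le>length s. 0 < k \<longrightarrow> walk_vertex s k \<noteq> walk_vertex t k"
    show "vertex_set s \<inter> vertex_set t \<subseteq> {(0, 0)}"
    proof
      fix p assume "p \<in> vertex_set s \<inter> vertex_set t"
      then obtain j k where j: "p = walk_vertex s j" "j \<le> length s"
        and k: "p = walk_vertex t k" "k \<le> length t"
        unfolding vertex_set_def by blast
      then have "j = k"
        using walk_vertex_eq_imp_same_index by metis
      with apart j k show "p \<in> {(0, 0)}"
        by (cases "j = 0") auto
    qed
  qed
  moreover have "(\<forall>k\<le>length s. 0 < k \<longrightarrow> walk_vertex s k \<noteq> walk_vertex t k) \<longleftrightarrow>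
      (\<forall>k<length s. walk_vertex s (Suc k) \<noteq> walk_vertex t (Suc k))"
    by (metis Suc_le_eq gr0_conv_Suc zero_less_Suc)
  ultimately show ?thesis
    by blast
qed

text \<open>\<open>d + fst (walk_vertex s k) - fst (walk_vertex t k)\<close> is the lazy walk started at d;
  \<open>apart d s t\<close> says that it avoids 0 at the times 1, ..., length s.\<close>

definition apart :: "int \<Rightarrow> bool list \<Rightarrow> bool list \<Rightarrow> bool" where
  "apart d s t \<longleftrightarrow> (\<forall>k<length s. d + fst (walk_vertex s (Suc k)) \<noteq> fst (walk_vertex t (Suc k)))"

lemma fst_step_vec [simp]: "fst (step_vec b) = of_bool b"
  by (simp add: step_vec_def)

lemma apart_Nil [simp]: "apart d [] t"
  by (simp add: apart_def)

lemma apart_Cons: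
  "apart d (a # s) (b # t) \<longleftrightarrow>
     d + of_bool a \<noteq> of_bool b \<and> apart (d + of_bool a - of_bool b) s t"
  unfolding apart_def length_Cons All_less_Suc2 by (auto simp: algebra_simps)

lemma apart_swap: "length s = length t \<Longrightarrow> apart (- d) t s \<longleftrightarrow> apart d s t"
  unfolding apart_def by (auto simp: algebra_simps)

lemma vertex_set_inter_eq_origin_iff_apart:
  assumes "length s = length t"
  shows "vertex_set s \<inter> vertex_set t = {(0, 0)} \<longleftrightarrow> apart 0 s t"
proof -
  have "walk_vertex s k = walk_vertex t k \<longleftrightarrow> fst (walk_vertex s k) = fst (walk_vertex t k)" for k
    using fst_plus_snd_walk_vertex[of s k] fst_plus_snd_walk_vertex[of t k] assms
    by (metis add_left_cancel prod.expand)
  then show ?thesis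
    unfolding vertex_set_inter_eq_origin_iff[OF assms] apart_def by simp
qed

definition apart_count :: "nat \<Rightarrow> int \<Rightarrow> nat" where
  "apart_count n d = card (walks n \<times> walks n \<inter> {(s, t). apart d s t})"

lemma apart_count_eq_sum:
  "apart_count n d = (\<Sum>s\<in>walks n. \<Sum>t\<in>walks n. of_bool (apart d s t))"
proof -
  have "apart_count n d = (\<Sum>x\<in>walks n \<times> walks n. of_bool (case x of (s, t) \<Rightarrow> apart d s t))"
    by (simp add: apart_count_def)
  then show ?thesis
    by (simp only: sum.cartesian_product prod.case_distrib)
qed

lemma apart_count_0 [simp]: "apart_count 0 d = 1"
  by (simp add: apart_count_eq_sum walks_def)

lemma apart_count_uminus: "apart_count n (- d) = apart_count n d"
proof -
  have "apart_count n (- d) = (\<Sum>s\<in>walks n. \<Sum>t\<in>walks n. of_bool (apart (- d) t s))"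
    unfolding apart_count_eq_sum by (rule sum.swap)
  also have "\<dots> = apart_count n d"
    unfolding apart_count_eq_sum by (intro sum.cong refl) (simp add: apart_swap walks_def)
  finally show ?thesis .
qed

lemma sum_walks_apart_Cons:
  "(\<Sum>s\<in>walks n. \<Sum>t\<in>walks n. of_bool (apart d (a # s) (b # t))) =
     (if d + of_bool a \<noteq> of_bool b then apart_count n (d + of_bool a - of_bool b) else 0)"
  by (cases "d + of_bool a = of_bool b") (simp_all add: apart_Cons apart_count_eq_sum)

lemma apart_count_Suc:
  "apart_count (Suc n) d =
     (if d + 1 \<noteq> 0 then apart_count n (d + 1) else 0) +
     2 * (if d \<noteq> 0 then apart_count n d else 0) +
     (if d - 1 \<noteq> 0 then apart_count n (d - 1) else 0)"
  unfolding apart_count_eq_sum[of "Suc n"] sum_walks_Suc sum.distrib sum_walks_apart_Cons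
  by (cases "d = -1") (simp_all add: algebra_simps)

definition binomial_prefix :: "nat \<Rightarrow> nat \<Rightarrow> nat" where
  "binomial_prefix n j = (\<Sum>k<j. n choose k)"

lemma binomial_prefix_0 [simp]: "binomial_prefix n 0 = 0"
  by (simp add: binomial_prefix_def)

lemma binomial_prefix_Suc_right [simp]:
  "binomial_prefix n (Suc j) = binomial_prefix n j + (n choose j)"
  by (simp add: binomial_prefix_def)

lemma binomial_prefix_0_left: "binomial_prefix 0 j = of_bool (0 < j)"
proof (induction j)
  case (Suc j)
  then show ?case by (cases j) simp_all
qed simp

lemma binomial_prefix_Suc: "binomial_prefix (Suc n) j = binomial_prefix n j + binomial_prefix n (j - 1)"
proof (induction j)
  case (Suc j)
  then show ?case by (cases j) simp_all
qed simp

lemma binomial_prefix_Suc_Suc: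
  "binomial_prefix (Suc (Suc n)) j =
     binomial_prefix n j + 2 * binomial_prefix n (j - 1) + binomial_prefix n (j - 2)"
  by (simp add: binomial_prefix_Suc numeral_2_eq_2)

text \<open>The window sum, stated additively to avoid truncated subtraction.\<close>

lemma apart_count_add_binomial_prefix:
  "0 < d \<Longrightarrow> apart_count m (int d) + binomial_prefix (2 * m) (m - d) = binomial_prefix (2 * m) (m + d)"
proof (induction m arbitrary: d)
  case 0
  then show ?case by (simp add: binomial_prefix_0_left)
next
  case (Suc m)
  let ?P = "binomial_prefix (2 * m)"
  have count: "apart_count (Suc m) (int d) = apart_count m (int (d + 1)) + 2 * apart_count m (int d)
      + (if d = 1 then 0 else apart_count m (int (d - 1)))"
    using Suc.prems by (simp add: apart_count_Suc of_nat_diff add.commute)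
  have lo: "binomial_prefix (2 * Suc m) (Suc m - d) = ?P (m - (d - 1)) + 2 * ?P (m - d) + ?P (m - (d + 1))"
    using Suc.prems binomial_prefix_Suc_Suc[of "2 * m" "Suc m - d"] by (simp add: Suc_diff_le)
  have hi: "binomial_prefix (2 * Suc m) (Suc m + d) = ?P (m + (d + 1)) + 2 * ?P (m + d) + ?P (m + (d - 1))"
    using Suc.prems binomial_prefix_Suc_Suc[of "2 * m" "Suc m + d"] by simp
  have "apart_count m (int (d + 1)) + ?P (m - (d + 1)) = ?P (m + (d + 1))"
    by (rule Suc.IH) simp
  moreover have "apart_count m (int d) + ?P (m - d) = ?P (m + d)"
    by (rule Suc.IH) (rule Suc.prems)
  moreover have "d \<noteq> 1 \<Longrightarrow> apart_count m (int (d - 1)) + ?P (m - (d - 1)) = ?P (m + (d - 1))"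
    by (rule Suc.IH) (use Suc.prems in simp)
  ultimately show ?case
    unfolding count lo hi by (cases "d = 1") simp_all
qed

lemma apart_count_1: "apart_count m 1 = Suc (2 * m) choose m"
proof (cases m)
  case (Suc k)
  then have "apart_count m 1 + binomial_prefix (2 * m) k = binomial_prefix (2 * m) (Suc (Suc k))"
    using apart_count_add_binomial_prefix[of 1 m] by simp
  then show ?thesis
    using Suc by simp
qed simp

lemma apart_count_0_eq_central_binomial:
  assumes "0 < n"
  shows "apart_count n 0 = (2 * n) choose n"
proof -
  obtain m where n: "n = Suc m"
    using assms gr0_conv_Suc by blast
  have "apart_count (Suc m) 0 = 2 * apart_count m 1"
    using apart_count_Suc[of m 0] apart_count_uminus[of m 1] by simp
  also have "\<dots> = (2 * Suc m) choose Suc m"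
    using central_binomial_odd[of "Suc (2 * m)"] by (simp add: apart_count_1)
  finally show ?thesis
    unfolding n .
qed

lemma walk_pairs_disjoint_eq_apart:
  "walks n \<times> walks n \<inter> {(s, t). vertex_set s \<inter> vertex_set t = {(0, 0)}} =
     walks n \<times> walks n \<inter> {(s, t). apart 0 s t}"
proof (rule set_eqI, clarify)
  fix s t
  show "(s, t) \<in> walks n \<times> walks n \<inter> {(s, t). vertex_set s \<inter> vertex_set t = {(0, 0)}} \<longleftrightarrow>
      (s, t) \<in> walks n \<times> walks n \<inter> {(s, t). apart 0 s t}"
    unfolding Int_iff mem_Collect_eq prod.case
    by (intro conj_cong refl vertex_set_inter_eq_origin_iff_apart) (simp add: walks_def)
qed

theorem corollary2:
  fixes n :: nat
  assumes "n \<ge> 1"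
  shows "measure_pmf.prob (pmf_of_set (walks n \<times> walks n))
           {(s, t). vertex_set s \<inter> vertex_set t = {(0, 0)}}
         = real (2 * n choose n) / 4 ^ n"
proof -
  let ?W = "walks n \<times> walks n"
  have "?W \<noteq> {}"
    using card_walks[of n] by fastforce
  then have "measure_pmf.prob (pmf_of_set ?W) {(s, t). vertex_set s \<inter> vertex_set t = {(0, 0)}}
      = real (card (?W \<inter> {(s, t). apart 0 s t})) / real (card ?W)"
    unfolding walk_pairs_disjoint_eq_apart[symmetric] by (simp add: measure_pmf_of_set)
  also have "card (?W \<inter> {(s, t). apart 0 s t}) = 2 * n choose n"
    using apart_count_0_eq_central_binomial[of n] assms unfolding apart_count_def by simp
  also have "card ?W = 4 ^ n"
    by (simp add: card_walks card_cartesian_product flip: power_mult_distrib)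
  finally show ?thesis
    by simp
qed

end
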